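(* Let $\Lambda=(V,\pi,v,\le)$ be a bi-colored weighted ordered vertex with $r(\Lambda)=2$, identify $V=\{1,\dots,l\}$ via $\le$, and suppose $V_\bullet=\{a,b\}$ with $b-a\ge3$. Then $$\sum_{(E,s,t)\in\mathcal{E}(\Lambda)}(-1)^{|E_{\bullet\to\circ}|}\prod_{e\in E}v(s(e))v(t(e))=0.$$
   Context: A bi-colored weighted ordered vertex is $\Lambda=(V,\pi,v,\le)$ with $V$ a finite set, $\pi\colon V\to\{\bullet,\circ\}$, $v\colon V\to\mathbb{Z}_{\ge1}$, $\le$ a total order on $V$; $V_\bullet=\pi^{-1}(\bullet)$, $r(\Lambda)=\sum_{i\in V_\bullet}v(i)$. $\mathcal{E}(\Lambda)$ is the set of data $(E,s,t)$ with $E$ a finite set and $s,t\colon E\to V$, such that the quiver $(V,E,s,t)$ has connected and simply connected geometric realization, $\pi s(e)\ne\pi t(e)$ and $s(e)<t(e)$ for all $e\in E$. $E_{\bullet\to\circ}=\{e\in E:\pi s(e)=\bullet\}$. *)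

theory Defs
  imports Main
begin

definition graph_connected :: "'a set \<Rightarrow> ('a \<times> 'a) set \<Rightarrow> bool" where
  "graph_connected V F \<longleftrightarrow> (\<forall>x\<in>V. \<forall>y\<in>V. (x, y) \<in> (F \<union> F\<inverse>)\<^sup>*)"

text \<open>Geometric realization connected and simply connected = a tree: connected and
  acyclic, where acyclic means every edge is a bridge (lies on no cycle).\<close>
definition is_tree :: "'a set \<Rightarrow> ('a \<times> 'a) set \<Rightarrow> bool" where
  "is_tree V F \<longleftrightarrow> graph_connected V F \<and> (\<forall>e\<in>F. \<not> graph_connected V (F - {e}))"

text \<open>The set \<E>(\<Lambda>) for V = {1..l} ordered naturally, colour map col (True = black,
  False = white): edge sets of trees on V, each edge going from a smaller to a larger
  vertex of different colour.\<close>
definition bc_trees :: "nat \<Rightarrow> (nat \<Rightarrow> bool) \<Rightarrow> (nat \<times> nat) set set" where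
  "bc_trees l col = {F. F \<subseteq> {(i, j). i \<in> {1..l} \<and> j \<in> {1..l} \<and> i < j \<and> col i \<noteq> col j}
                        \<and> is_tree {1..l} F}"

end

theory Submission imports Defs begin

text \<open>Both black vertices have weight 1. A white vertex w strictly between a and b can only be
  joined to a (by the edge (a, w)) or to b (by (w, b)), so in every tree it is a leaf hanging
  at a or at b, or it is joined to both. Moving a leaf w from a to b or back is a bijection of
  trees that keeps the weight and changes the number of black-sourced edges by one. Two such
  white vertices cannot both be joined to a and b (that would be a 4-cycle), so toggling the
  first one that is a leaf is a sign-reversing involution.\<close>

lemma sum_eq_0_by_sign_reversing_involution:
  fixes f :: "'a \<Rightarrow> 'b::linordered_ab_group_add"
  assumes "\<And>x. x \<in> A \<Longrightarrow> \<iota> x \<in> A" and "\<And>x. x \<in> A \<Longrightarrow> \<iota> (\<iota> x) = x"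
    and "\<And>x. x \<in> A \<Longrightarrow> f (\<iota> x) = - f x"
  shows "sum f A = 0"
proof -
  have "sum f A = sum (\<lambda>x. f (\<iota> x)) A"
    by (rule sum.reindex_bij_witness[of A \<iota> \<iota>]) (use assms in auto)
  also have "\<dots> = - sum f A"
    using assms(3) by (simp add: sum_negf[symmetric])
  finally show ?thesis by simp
qed

lemma graph_connected_incident_edge:
  assumes "graph_connected V F" and "w \<in> V" "u \<in> V" "u \<noteq> w"
  obtains z where "(w, z) \<in> F \<or> (z, w) \<in> F"
proof -
  have "(w, u) \<in> (F \<union> F\<inverse>)\<^sup>*"
    using assms by (auto simp: graph_connected_def)
  then obtain z where "(w, z) \<in> F \<union> F\<inverse>"
    using \<open>u \<noteq> w\<close> by (metis converse_rtranclE)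
  then show thesis using that by auto
qed

lemma rtrancl_avoiding_pendant_edge:
  fixes R :: "('a \<times> 'a) set"
  assumes out: "\<And>z. (w, z) \<in> R \<Longrightarrow> z = p" and into: "\<And>z. (z, w) \<in> R \<Longrightarrow> z = p"
    and "p \<noteq> w" and xy: "(x, y) \<in> R\<^sup>*" and "x \<noteq> w"
  shows "(y = w \<and> (x, p) \<in> (R - {(p, w), (w, p)})\<^sup>*) \<or> (y \<noteq> w \<and> (x, y) \<in> (R - {(p, w), (w, p)})\<^sup>*)"
  using xy
proof (induction rule: rtrancl_induct)
  case base
  then show ?case using \<open>x \<noteq> w\<close> by auto
next
  case (step y z)
  consider "y = w" | "y \<noteq> w" "z = w" | "y \<noteq> w" "z \<noteq> w" by blast
  then show ?case
  proof cases
    case 1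
    then show ?thesis using out step \<open>p \<noteq> w\<close> by auto
  next
    case 2
    then show ?thesis using into step by auto
  next
    case 3
    then have "(y, z) \<in> R - {(p, w), (w, p)}" using step.hyps(2) by auto
    then show ?thesis using step.IH 3 by (meson rtrancl_into_rtrancl)
  qed
qed

text \<open>Every path through the pendant vertex w passes through its neighbour p, so after
  replacing the edge at w by one to another vertex q, every vertex still reaches p.\<close>
lemma graph_connected_reattach_pendant:
  assumes conn: "graph_connected V F" and "w \<in> V" "p \<in> V" "p \<noteq> w" "q \<in> V" "q \<noteq> w"
    and pendant: "\<And>z. (w, z) \<in> F \<or> (z, w) \<in> F \<Longrightarrow> z = p"
    and kept: "F - {(p, w), (w, p)} \<subseteq> F'" and new: "(q, w) \<in> F' \<or> (w, q) \<in> F'"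
  shows "graph_connected V F'"
proof -
  define R where "R = F \<union> F\<inverse>"
  define R' where "R' = F' \<union> F'\<inverse>"
  have avoiding: "(R - {(p, w), (w, p)})\<^sup>* \<subseteq> R'\<^sup>*"
    by (rule rtrancl_mono) (use kept in \<open>auto simp: R_def R'_def\<close>)
  have out: "\<And>z. (w, z) \<in> R \<Longrightarrow> z = p" and into: "\<And>z. (z, w) \<in> R \<Longrightarrow> z = p"
    using pendant by (auto simp: R_def)
  have path: "\<And>x y. x \<in> V \<Longrightarrow> y \<in> V \<Longrightarrow> (x, y) \<in> R\<^sup>*"
    using conn by (auto simp: graph_connected_def R_def)
  have to_p: "(x, p) \<in> R'\<^sup>*" if "x \<in> V" for x
  proof (cases "x = w")
    case True
    have "(w, q) \<in> R'" using new by (auto simp: R'_def)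
    moreover have "(q, p) \<in> R'\<^sup>*"
      using rtrancl_avoiding_pendant_edge[OF out into \<open>p \<noteq> w\<close> path[OF \<open>q \<in> V\<close> \<open>p \<in> V\<close>]]
        \<open>q \<noteq> w\<close> avoiding by auto
    ultimately show ?thesis using True by auto
  next
    case False
    then show ?thesis
      using rtrancl_avoiding_pendant_edge[OF out into \<open>p \<noteq> w\<close> path[OF that \<open>p \<in> V\<close>]]
        \<open>p \<noteq> w\<close> avoiding by auto
  qed
  have "R'\<inverse> = R'" by (auto simp: R'_def)
  then have from_p: "(p, y) \<in> R'\<^sup>*" if "y \<in> V" for y
    using rtrancl_converseI[OF to_p[OF that]] by simp
  show ?thesis unfolding graph_connected_def
    using to_p from_p by (fold R'_def) (meson rtrancl_trans)
qed

lemma is_tree_reattach_leaf: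
  assumes tree: "is_tree V F" and "w \<in> V" "p \<in> V" "q \<in> V" "p \<noteq> w" "q \<noteq> w" "p \<noteq> q"
    and ep: "ep \<in> F" "ep \<in> {(p, w), (w, p)}"
    and leaf: "\<And>e. e \<in> F \<Longrightarrow> fst e = w \<or> snd e = w \<Longrightarrow> e = ep"
    and eq: "eq \<in> {(q, w), (w, q)}"
  shows "is_tree V (F - {ep} \<union> {eq})"
proof -
  have conn: "graph_connected V F" and bridges: "\<forall>e\<in>F. \<not> graph_connected V (F - {e})"
    using tree by (auto simp: is_tree_def)
  have pendant: "z = p" if "(w, z) \<in> F \<or> (z, w) \<in> F" for z
    using that leaf[of "(w, z)"] leaf[of "(z, w)"] ep(2) \<open>p \<noteq> w\<close> by force
  have "eq \<notin> F"
    using leaf[of eq] eq ep(2) \<open>p \<noteq> q\<close> by auto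
  have "graph_connected V (F - {ep} \<union> {eq})"
    by (rule graph_connected_reattach_pendant[OF conn \<open>w \<in> V\<close> \<open>p \<in> V\<close> \<open>p \<noteq> w\<close> \<open>q \<in> V\<close>
          \<open>q \<noteq> w\<close> pendant]) (use ep eq in auto)
  moreover have "\<not> graph_connected V (F - {ep} \<union> {eq} - {e})" if e: "e \<in> F - {ep} \<union> {eq}" for e
  proof
    assume conn': "graph_connected V (F - {ep} \<union> {eq} - {e})"
    show False
    proof (cases "e = eq")
      case True
      then have "F - {ep} \<union> {eq} - {e} = F - {ep}" using \<open>eq \<notin> F\<close> by auto
      then obtain z where "(w, z) \<in> F - {ep} \<or> (z, w) \<in> F - {ep}"
        using graph_connected_incident_edge[OF conn' \<open>w \<in> V\<close> \<open>p \<in> V\<close> \<open>p \<noteq> w\<close>] by auto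
      then show False using leaf by force
    next
      case False
      have pendant': "z = q" if "(w, z) \<in> F - {ep} \<union> {eq} - {e} \<or> (z, w) \<in> F - {ep} \<union> {eq} - {e}" for z
        using that leaf eq \<open>q \<noteq> w\<close> by force
      have "graph_connected V (F - {e})"
        by (rule graph_connected_reattach_pendant[OF conn' \<open>w \<in> V\<close> \<open>q \<in> V\<close> \<open>q \<noteq> w\<close>
              \<open>p \<in> V\<close> \<open>p \<noteq> w\<close> pendant']) (use ep e False eq in auto)
      then show False using bridges e False by auto
    qed
  qed
  ultimately show ?thesis by (auto simp: is_tree_def)
qed

lemma is_tree_edge_not_redundant:
  assumes "is_tree V F" and "(x, y) \<in> F"
  shows "(x, y) \<notin> ((F - {(x, y)}) \<union> (F - {(x, y)})\<inverse>)\<^sup>*"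
proof
  define R where "R = (F - {(x, y)}) \<union> (F - {(x, y)})\<inverse>"
  assume "(x, y) \<in> R\<^sup>*"
  moreover have "R\<inverse> = R" by (auto simp: R_def)
  ultimately have "(y, x) \<in> R\<^sup>*" using rtrancl_converseI by metis
  with \<open>(x, y) \<in> R\<^sup>*\<close> have "F \<union> F\<inverse> \<subseteq> R\<^sup>*" by (auto simp: R_def)
  then have "(F \<union> F\<inverse>)\<^sup>* \<subseteq> R\<^sup>*" by (rule rtrancl_subset_rtrancl)
  then have "graph_connected V (F - {(x, y)})"
    using assms(1) by (auto simp: is_tree_def graph_connected_def R_def)
  then show False using assms by (auto simp: is_tree_def)
qed

lemma bc_trees_finite:
  assumes "F \<in> bc_trees l col" shows "finite F"
proof (rule finite_subset)
  show "F \<subseteq> {1..l} \<times> {1..l}" using assms by (auto simp: bc_trees_def)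
qed simp

definition toggle_leaf :: "nat \<Rightarrow> nat \<Rightarrow> nat \<Rightarrow> (nat \<times> nat) set \<Rightarrow> (nat \<times> nat) set" where
  "toggle_leaf a b w F =
     (if (a, w) \<in> F then F - {(a, w)} \<union> {(w, b)} else F - {(w, b)} \<union> {(a, w)})"

definition bc_weight :: "(nat \<Rightarrow> bool) \<Rightarrow> (nat \<Rightarrow> nat) \<Rightarrow> (nat \<times> nat) set \<Rightarrow> int" where
  "bc_weight col v F = (-1) ^ card {e \<in> F. col (fst e)} * (\<Prod>e\<in>F. int (v (fst e) * v (snd e)))"

lemma toggle_leaf_exclusive:
  "a \<noteq> w \<Longrightarrow> (a, w) \<in> toggle_leaf a b w F \<longleftrightarrow> (w, b) \<notin> toggle_leaf a b w F"
  by (auto simp: toggle_leaf_def)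

lemma toggle_leaf_toggle_leaf:
  "a \<noteq> w \<Longrightarrow> ((a, w) \<in> F \<longleftrightarrow> (w, b) \<notin> F) \<Longrightarrow> toggle_leaf a b w (toggle_leaf a b w F) = F"
  by (auto simp: toggle_leaf_def)

lemma bc_weight_move_edge:
  assumes "finite F" "e \<in> F" "e' \<notin> F" "v (fst e) * v (snd e) = v (fst e') * v (snd e')"
  shows "bc_weight col v (F - {e} \<union> {e'}) =
    (-1) ^ (card {d \<in> F - {e} \<union> {e'}. col (fst d)} + card {d \<in> F. col (fst d)}) * bc_weight col v F"
proof -
  have "(\<Prod>d\<in>F - {e} \<union> {e'}. int (v (fst d) * v (snd d))) = (\<Prod>d\<in>F. int (v (fst d) * v (snd d)))"
    using assms by (simp add: prod.remove[of F e] insert_Diff_if flip: of_nat_mult)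
  then show ?thesis
    by (simp add: bc_weight_def power_add mult.assoc flip: power_mult_distrib)
qed

locale two_black_vertices =
  fixes l a b :: nat and col :: "nat \<Rightarrow> bool"
  assumes black_vertices: "{i \<in> {1..l}. col i} = {a, b}"
begin

lemma black_endpoints: "a \<in> {1..l}" "b \<in> {1..l}" "col a" "col b"
  using black_vertices by blast+

lemma bc_tree_edge_at_between:
  assumes "F \<in> bc_trees l col" "w \<in> {1..l}" "a < w" "w < b"
    and "e \<in> F" "fst e = w \<or> snd e = w"
  shows "e = (a, w) \<or> e = (w, b)"
proof -
  have black: "i \<in> {1..l} \<Longrightarrow> col i \<longleftrightarrow> i = a \<or> i = b" for i
    using black_vertices black_endpoints by blast
  obtain i j where "e = (i, j)" "i \<in> {1..l}" "j \<in> {1..l}" "i < j" "col i \<noteq> col j"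
    using assms(1,5) by (auto simp: bc_trees_def)
  then show ?thesis using assms(2-4,6) black[of i] black[of j] black[of w] by auto
qed

lemma bc_tree_has_edge_at_between:
  assumes "F \<in> bc_trees l col" "w \<in> {1..l}" "a < w" "w < b"
  shows "(a, w) \<in> F \<or> (w, b) \<in> F"
proof -
  have "graph_connected {1..l} F" using assms(1) by (auto simp: bc_trees_def is_tree_def)
  moreover have "a \<noteq> w" using assms(3) by simp
  ultimately obtain z where "(w, z) \<in> F \<or> (z, w) \<in> F"
    using graph_connected_incident_edge assms(2) black_endpoints(1) by metis
  then show ?thesis
    using bc_tree_edge_at_between[OF assms, of "(w, z)"] bc_tree_edge_at_between[OF assms, of "(z, w)"]
    by auto
qed

lemma bc_tree_no_square:
  assumes "F \<in> bc_trees l col" "a < w" "w < b" "a < w'" "w' < b" "w \<noteq> w'"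
  shows "\<not> ((a, w) \<in> F \<and> (w, b) \<in> F \<and> (a, w') \<in> F \<and> (w', b) \<in> F)"
proof
  assume square: "(a, w) \<in> F \<and> (w, b) \<in> F \<and> (a, w') \<in> F \<and> (w', b) \<in> F"
  define R where "R = (F - {(a, w)}) \<union> (F - {(a, w)})\<inverse>"
  have "(a, w') \<in> R" "(w', b) \<in> R" "(b, w) \<in> R"
    using square assms(2-6) by (auto simp: R_def)
  then have "(a, w) \<in> R\<^sup>*" by (meson r_into_rtrancl rtrancl_trans)
  moreover have "is_tree {1..l} F" using assms(1) by (simp add: bc_trees_def)
  ultimately show False using is_tree_edge_not_redundant[of "{1..l}" F a w] square by (simp add: R_def)
qed

lemma white_between: "w \<in> {1..l} \<Longrightarrow> a < w \<Longrightarrow> w < b \<Longrightarrow> \<not> col w"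
  using black_vertices by (metis (mono_tags) insert_iff mem_Collect_eq less_irrefl singletonD)

lemma toggle_leaf_in_bc_trees:
  assumes F: "F \<in> bc_trees l col" and w: "w \<in> {1..l}" "a < w" "w < b"
    and leaf: "\<not> ((a, w) \<in> F \<and> (w, b) \<in> F)"
  shows "toggle_leaf a b w F \<in> bc_trees l col"
proof -
  have tree: "is_tree {1..l} F" using F by (simp add: bc_trees_def)
  have ends: "a \<in> {1..l}" "b \<in> {1..l}" "a \<noteq> w" "b \<noteq> w" "a \<noteq> b"
    using black_endpoints w by auto
  have at_w: "e = (a, w) \<or> e = (w, b)" if "e \<in> F" "fst e = w \<or> snd e = w" for e
    using bc_tree_edge_at_between[OF F w that] .
  have "is_tree {1..l} (toggle_leaf a b w F)"
  proof (cases "(a, w) \<in> F")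
    case True
    then have "e = (a, w)" if "e \<in> F" "fst e = w \<or> snd e = w" for e
      using that(1) at_w[OF that] leaf by blast
    from is_tree_reattach_leaf[OF tree w(1) ends(1,2,3,4,5) True _ this, of "(w, b)"]
    show ?thesis using True by (simp add: toggle_leaf_def)
  next
    case False
    then have "(w, b) \<in> F" using bc_tree_has_edge_at_between[OF F w] by simp
    moreover have "e = (w, b)" if "e \<in> F" "fst e = w \<or> snd e = w" for e
      using that(1) at_w[OF that] False by blast
    ultimately have "is_tree {1..l} (F - {(w, b)} \<union> {(a, w)})"
      using is_tree_reattach_leaf[OF tree w(1) ends(2,1,4,3) ends(5)[symmetric], of "(w, b)" "(a, w)"]
      by blast
    then show ?thesis using False by (simp add: toggle_leaf_def)
  qed
  moreover have "toggle_leaf a b w F \<subseteq> F \<union> {(a, w), (w, b)}"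
    by (auto simp: toggle_leaf_def)
  moreover have "F \<union> {(a, w), (w, b)} \<subseteq> {(i, j). i \<in> {1..l} \<and> j \<in> {1..l} \<and> i < j \<and> col i \<noteq> col j}"
    using F w black_endpoints white_between[OF w] by (auto simp: bc_trees_def)
  ultimately show ?thesis unfolding bc_trees_def by blast
qed

lemma bc_weight_toggle_leaf:
  assumes F: "F \<in> bc_trees l col" and w: "w \<in> {1..l}" "a < w" "w < b"
    and leaf: "\<not> ((a, w) \<in> F \<and> (w, b) \<in> F)" and "v a = v b"
  shows "bc_weight col v (toggle_leaf a b w F) = - bc_weight col v F"
proof -
  have "finite F" using F by (rule bc_trees_finite)
  have black_sourced: "col (fst (a, w))" "\<not> col (fst (w, b))"
    using black_endpoints white_between[OF w] by auto
  show ?thesis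
  proof (cases "(a, w) \<in> F")
    case True
    let ?B = "{d \<in> F. col (fst d)}"
    have "{d \<in> F - {(a, w)} \<union> {(w, b)}. col (fst d)} = ?B - {(a, w)}"
      using black_sourced by auto
    moreover have "finite ?B" "(a, w) \<in> ?B" using \<open>finite F\<close> True black_sourced by auto
    ultimately have "card {d \<in> F - {(a, w)} \<union> {(w, b)}. col (fst d)} + card ?B = 2 * card ?B - 1"
      by (simp add: card_Diff_singleton card_gt_0_iff)
    moreover have "odd (2 * card ?B - 1)" using \<open>(a, w) \<in> ?B\<close> \<open>finite ?B\<close> card_gt_0_iff by fastforce
    ultimately show ?thesis
      using bc_weight_move_edge[OF \<open>finite F\<close> True, of "(w, b)" v col] leaf True \<open>v a = v b\<close>
      by (simp add: toggle_leaf_def)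
  next
    case False
    then have "(w, b) \<in> F" using bc_tree_has_edge_at_between[OF F w] by auto
    let ?B = "{d \<in> F. col (fst d)}"
    have "{d \<in> F - {(w, b)} \<union> {(a, w)}. col (fst d)} = insert (a, w) ?B"
      using black_sourced by auto
    then have "card {d \<in> F - {(w, b)} \<union> {(a, w)}. col (fst d)} + card ?B = 2 * card ?B + 1"
      using \<open>finite F\<close> False by simp
    then show ?thesis
      using bc_weight_move_edge[OF \<open>finite F\<close> \<open>(w, b) \<in> F\<close>, of "(a, w)" v col] False \<open>v a = v b\<close>
      by (simp add: toggle_leaf_def)
  qed
qed

text \<open>The involution toggles w unless w is joined to both black vertices; then w' is a leaf
  by the no-square lemma, and toggling w' keeps w joined to both, so the choice is stable.\<close>
lemma bc_weight_sum_eq_0: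
  assumes "v a = v b" and w: "w \<in> {1..l}" "a < w" "w < b" and w': "w' \<in> {1..l}" "a < w'" "w' < b"
    and "w \<noteq> w'"
  shows "(\<Sum>F\<in>bc_trees l col. bc_weight col v F) = 0"
proof -
  define \<iota> where "\<iota> F = (if (a, w) \<in> F \<and> (w, b) \<in> F then toggle_leaf a b w' F else toggle_leaf a b w F)"
    for F
  have "\<iota> F \<in> bc_trees l col \<and> \<iota> (\<iota> F) = F \<and> bc_weight col v (\<iota> F) = - bc_weight col v F"
    if F: "F \<in> bc_trees l col" for F
  proof -
    consider (double) "(a, w) \<in> F" "(w, b) \<in> F" "\<not> ((a, w') \<in> F \<and> (w', b) \<in> F)"
      | (leaf) "\<not> ((a, w) \<in> F \<and> (w, b) \<in> F)"
      using bc_tree_no_square[OF F w(2,3) w'(2,3) \<open>w \<noteq> w'\<close>] by blast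
    then show ?thesis
    proof cases
      case double
      have "(a, w') \<in> F \<longleftrightarrow> (w', b) \<notin> F" using double(3) bc_tree_has_edge_at_between[OF F w'] by blast
      moreover have "(a, w) \<in> toggle_leaf a b w' F \<and> (w, b) \<in> toggle_leaf a b w' F"
        using double \<open>w \<noteq> w'\<close> w w' by (auto simp: toggle_leaf_def)
      ultimately show ?thesis
        using double toggle_leaf_in_bc_trees[OF F w'] bc_weight_toggle_leaf[OF F w' _ \<open>v a = v b\<close>]
          toggle_leaf_toggle_leaf[of a w' F b] w' by (simp add: \<iota>_def)
    next
      case leaf
      have "(a, w) \<in> F \<longleftrightarrow> (w, b) \<notin> F" using leaf bc_tree_has_edge_at_between[OF F w] by blast
      moreover have "\<not> ((a, w) \<in> toggle_leaf a b w F \<and> (w, b) \<in> toggle_leaf a b w F)"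
        using toggle_leaf_exclusive[of a w b F] w by auto
      then have "\<iota> (\<iota> F) = toggle_leaf a b w (toggle_leaf a b w F)"
        using leaf unfolding \<iota>_def by (simp only: if_not_P if_False)
      ultimately show ?thesis
        using leaf toggle_leaf_in_bc_trees[OF F w] bc_weight_toggle_leaf[OF F w _ \<open>v a = v b\<close>]
          toggle_leaf_toggle_leaf[of a w F b] w by (simp add: \<iota>_def)
    qed
  qed
  then show ?thesis
    by (intro sum_eq_0_by_sign_reversing_involution[where \<iota> = \<iota>]) blast+
qed

end

theorem lemma4p13:
  fixes l a b :: nat and col :: "nat \<Rightarrow> bool" and v :: "nat \<Rightarrow> nat"
  assumes "\<forall>i\<in>{1..l}. v i \<ge> 1"
    and "{i \<in> {1..l}. col i} = {a, b}"
    and "(\<Sum>i\<in>{i \<in> {1..l}. col i}. v i) = 2"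
    and "a + 3 \<le> b"
  shows "(\<Sum>F\<in>bc_trees l col. (-1::int) ^ card {e \<in> F. col (fst e)}
            * (\<Prod>e\<in>F. int (v (fst e) * v (snd e)))) = 0"
proof -
  interpret two_black_vertices l a b col by unfold_locales (rule assms(2))
  have "v a + v b = 2" using assms(3,4) unfolding assms(2) by simp
  moreover have "v a \<ge> 1" "v b \<ge> 1" using assms(1) black_endpoints by auto
  ultimately have "v a = v b" by linarith
  have "a + 1 \<in> {1..l}" "a + 2 \<in> {1..l}" using black_endpoints assms(4) by auto
  then have "(\<Sum>F\<in>bc_trees l col. bc_weight col v F) = 0"
    using bc_weight_sum_eq_0[where v = v and w = "a + 1" and w' = "a + 2"] \<open>v a = v b\<close> assms(4)
    by simp
  then show ?thesis by (simp add: bc_weight_def)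
qed

end
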